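(* Let $\mathbb{K}$ be an algebraically closed field of characteristic zero and let $X$ be an irreducible affine variety with $X\cong Y\times\mathbb{A}^1$, where $Y$ is an affine variety admitting a nonzero locally nilpotent derivation of $\mathbb{K}[Y]$. Suppose that $\mathrm{HD}^*(X)\neq\mathbb{K}[X]$. Then $\mathrm{HD}^*(X)$ is not a finitely generated $\mathbb{K}$-algebra.
   Context: A derivation $\partial$ of $\mathbb{K}[X]$ is locally nilpotent (LND) if for every $a\in\mathbb{K}[X]$ there is $n$ with $\partial^n(a)=0$. An element $s\in\mathbb{K}[X]$ is a slice of an LND $\partial$ if $\partial(s)=1$. Let $\mathrm{LND}^*(X)$ be the set of LNDs of $\mathbb{K}[X]$ admitting a slice. The modified Derksen invariant $\mathrm{HD}^*(X)$ is the $\mathbb{K}$-subalgebra of $\mathbb{K}[X]$ generated by the kernels $\ker\partial$ for all $\partial\in\mathrm{LND}^*(X)$. *)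

theory Defs
  imports "HOL-Computational_Algebra.Polynomial"
begin

definition alg_closed_field :: "'k::field itself \<Rightarrow> bool" where
  "alg_closed_field _ \<longleftrightarrow> (\<forall>p::'k poly. degree p > 0 \<longrightarrow> (\<exists>x. poly p x = 0))"

text \<open>A K-algebra structure on a commutative ring 'r is given by a ring homomorphism
  iota from the field 'k into 'r.\<close>
definition ring_hom_map :: "('k::field \<Rightarrow> 'r::comm_ring_1) \<Rightarrow> bool" where
  "ring_hom_map \<iota> \<longleftrightarrow> \<iota> 1 = 1 \<and> (\<forall>a b. \<iota> (a + b) = \<iota> a + \<iota> b) \<and> (\<forall>a b. \<iota> (a * b) = \<iota> a * \<iota> b)"

inductive_set alg_gen :: "('k \<Rightarrow> 'r::comm_ring_1) \<Rightarrow> 'r set \<Rightarrow> 'r set"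
  for \<iota> :: "'k \<Rightarrow> 'r" and S :: "'r set" where
  gen_base: "x \<in> S \<Longrightarrow> x \<in> alg_gen \<iota> S"
| gen_const: "\<iota> c \<in> alg_gen \<iota> S"
| gen_add: "x \<in> alg_gen \<iota> S \<Longrightarrow> y \<in> alg_gen \<iota> S \<Longrightarrow> x + y \<in> alg_gen \<iota> S"
| gen_uminus: "x \<in> alg_gen \<iota> S \<Longrightarrow> - x \<in> alg_gen \<iota> S"
| gen_mult: "x \<in> alg_gen \<iota> S \<Longrightarrow> y \<in> alg_gen \<iota> S \<Longrightarrow> x * y \<in> alg_gen \<iota> S"

definition fg_algebra :: "('k \<Rightarrow> 'r::comm_ring_1) \<Rightarrow> 'r set \<Rightarrow> bool" where
  "fg_algebra \<iota> A \<longleftrightarrow> (\<exists>G. finite G \<and> alg_gen \<iota> G = A)"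

definition is_derivation :: "('k \<Rightarrow> 'r::comm_ring_1) \<Rightarrow> ('r \<Rightarrow> 'r) \<Rightarrow> bool" where
  "is_derivation \<iota> D \<longleftrightarrow> (\<forall>a b. D (a + b) = D a + D b) \<and> (\<forall>a b. D (a * b) = a * D b + b * D a)
     \<and> (\<forall>c. D (\<iota> c) = 0)"

definition is_LND :: "('k \<Rightarrow> 'r::comm_ring_1) \<Rightarrow> ('r \<Rightarrow> 'r) \<Rightarrow> bool" where
  "is_LND \<iota> D \<longleftrightarrow> is_derivation \<iota> D \<and> (\<forall>a. \<exists>n. (D ^^ n) a = 0)"

definition LND_star :: "('k \<Rightarrow> 'r::comm_ring_1) \<Rightarrow> ('r \<Rightarrow> 'r) set" where
  "LND_star \<iota> = {D. is_LND \<iota> D \<and> (\<exists>s. D s = 1)}"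

definition HD_star :: "('k \<Rightarrow> 'r::comm_ring_1) \<Rightarrow> 'r set" where
  "HD_star \<iota> = alg_gen \<iota> (\<Union>D\<in>LND_star \<iota>. {a. D a = 0})"

end

theory Submission
  imports Defs
begin

text \<open>Write \<open>K[X] = B[x]\<close> with \<open>B = K[Y]\<close>, and let \<open>g\<close> be a local slice of a nonzero LND \<open>D\<close> of
  \<open>B\<close>, i.e. \<open>h = D g \<noteq> 0\<close> and \<open>D h = 0\<close>. For every \<open>m\<close>, \<open>\<partial>\<^sub>x - x\<^sup>m D\<close> (with \<open>D\<close> acting on
  coefficients) is an LND of \<open>B[x]\<close> with slice \<open>x\<close> whose kernel contains
  \<open>g + h x\<^sup>m\<^sup>+\<^sup>1 / (m + 1)\<close>; hence \<open>h x\<^sup>n \<in> HD\<^sup>*(X)\<close> for all \<open>n\<close>. Besides \<open>B = ker \<partial>\<^sub>x\<close>, the algebra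
  \<open>HD\<^sup>*(X)\<close> is stable under the automorphisms \<open>x \<mapsto> 2x\<close> and \<open>x \<mapsto> x + 1\<close>, since conjugation
  preserves \<open>LND\<^sup>*(X)\<close>. Hence it contains the homogeneous components of its elements, and
  \<open>c x\<close> whenever it contains some \<open>c x\<^sup>k\<close> with \<open>k \<ge> 1\<close>.
  If \<open>HD\<^sup>*(X)\<close> were finitely generated, it would be Noetherian by Hilbert's basis theorem, so
  the ideals generated by \<open>h, h x, \<dots>, h x\<^sup>n\<^sup>-\<^sup>1\<close> would stabilise. Comparing coefficients of
  \<open>x\<^sup>M\<close> in \<open>h x\<^sup>M = \<Sum> c\<^sub>i h x\<^sup>i\<close> then yields \<open>x \<in> HD\<^sup>*(X)\<close>, i.e. \<open>HD\<^sup>*(X) = K[X]\<close>.\<close>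

section \<open>Subrings, ideals and Noetherian subrings\<close>

definition is_ring_hom :: "('a::comm_ring_1 \<Rightarrow> 'b::comm_ring_1) \<Rightarrow> bool" where
  "is_ring_hom f \<longleftrightarrow> f 1 = 1 \<and> (\<forall>a b. f (a + b) = f a + f b) \<and> (\<forall>a b. f (a * b) = f a * f b)"

lemma ring_hom_map_iff_is_ring_hom: "ring_hom_map \<iota> \<longleftrightarrow> is_ring_hom \<iota>"
  unfolding ring_hom_map_def is_ring_hom_def ..

context
  fixes f :: "'a::comm_ring_1 \<Rightarrow> 'b::comm_ring_1"
  assumes hom: "is_ring_hom f"
begin

lemma ring_hom_1: "f 1 = 1"
  and ring_hom_add: "f (a + b) = f a + f b"
  and ring_hom_mult: "f (a * b) = f a * f b"
  using hom unfolding is_ring_hom_def by auto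

lemma ring_hom_0: "f 0 = 0"
  using ring_hom_add[of 0 0] by simp

lemma ring_hom_uminus: "f (- a) = - f a"
  using ring_hom_add[of a "- a"] by (simp add: ring_hom_0 add_eq_0_iff)

lemma ring_hom_diff: "f (a - b) = f a - f b"
  using ring_hom_add[of a "- b"] by (simp add: ring_hom_uminus)

lemma ring_hom_sum: "f (sum g A) = (\<Sum>x\<in>A. f (g x))"
  using sum_comp_morphism[of f g A] by (simp add: ring_hom_0 ring_hom_add o_def)

lemma ring_hom_of_nat: "f (of_nat n) = of_nat n"
  by (induction n) (simp_all add: ring_hom_0 ring_hom_1 ring_hom_add)

lemma ring_hom_power: "f (a ^ n) = f a ^ n"
  by (induction n) (simp_all add: ring_hom_1 ring_hom_mult)

end

lemma ring_hom_inverse: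
  fixes f :: "'k::field \<Rightarrow> 'a::comm_ring_1"
  assumes "is_ring_hom f" "c \<noteq> 0"
  shows "f (inverse c) * f c = 1"
  using assms ring_hom_mult[of f "inverse c" c] ring_hom_1[of f] by simp

definition is_subring :: "'a::comm_ring_1 set \<Rightarrow> bool" where
  "is_subring S \<longleftrightarrow> 0 \<in> S \<and> 1 \<in> S \<and> (\<forall>a\<in>S. \<forall>b\<in>S. a + b \<in> S \<and> a * b \<in> S) \<and> (\<forall>a\<in>S. - a \<in> S)"

context
  fixes S :: "'a::comm_ring_1 set"
  assumes S: "is_subring S"
begin

lemma subring_0: "0 \<in> S"
  and subring_1: "1 \<in> S"
  and subring_add: "a \<in> S \<Longrightarrow> b \<in> S \<Longrightarrow> a + b \<in> S"
  and subring_mult: "a \<in> S \<Longrightarrow> b \<in> S \<Longrightarrow> a * b \<in> S"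
  and subring_uminus: "a \<in> S \<Longrightarrow> - a \<in> S"
  using S unfolding is_subring_def by auto

lemma subring_diff: "a \<in> S \<Longrightarrow> b \<in> S \<Longrightarrow> a - b \<in> S"
  using subring_add subring_uminus by (metis diff_conv_add_uminus)

lemma subring_sum: "(\<And>x. x \<in> A \<Longrightarrow> g x \<in> S) \<Longrightarrow> sum g A \<in> S"
  by (induction A rule: infinite_finite_induct) (simp_all add: subring_0 subring_add)

lemma subring_power: "a \<in> S \<Longrightarrow> a ^ n \<in> S"
  by (induction n) (simp_all add: subring_1 subring_mult)

lemma is_subring_image:
  assumes f: "is_ring_hom f"
  shows "is_subring (f ` S)"
proof -
  have "f a + f b = f (a + b)" "f a * f b = f (a * b)" "- f a = f (- a)" for a b
    by (simp_all add: ring_hom_add[OF f] ring_hom_mult[OF f] ring_hom_uminus[OF f])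
  then show ?thesis
    unfolding is_subring_def
    using subring_0 subring_1 subring_add subring_mult subring_uminus
      ring_hom_0[OF f, symmetric] ring_hom_1[OF f, symmetric]
    by (auto simp del: ring_hom_0 ring_hom_1)
qed

end

lemma is_subring_UNIV: "is_subring UNIV"
  unfolding is_subring_def by simp

definition is_ideal :: "'a::comm_ring_1 set \<Rightarrow> 'a set \<Rightarrow> bool" where
  "is_ideal S I \<longleftrightarrow> I \<subseteq> S \<and> 0 \<in> I \<and> (\<forall>a\<in>I. \<forall>b\<in>I. a + b \<in> I) \<and> (\<forall>s\<in>S. \<forall>a\<in>I. s * a \<in> I)"

context
  fixes S I :: "'a::comm_ring_1 set"
  assumes I: "is_ideal S I"
begin

lemma ideal_subset: "I \<subseteq> S"
  and ideal_0: "0 \<in> I"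
  and ideal_add: "a \<in> I \<Longrightarrow> b \<in> I \<Longrightarrow> a + b \<in> I"
  and ideal_mult: "s \<in> S \<Longrightarrow> a \<in> I \<Longrightarrow> s * a \<in> I"
  using I unfolding is_ideal_def by auto

lemma ideal_diff: "is_subring S \<Longrightarrow> a \<in> I \<Longrightarrow> b \<in> I \<Longrightarrow> a - b \<in> I"
  using ideal_add[of a "- 1 * b"] ideal_mult[of "- 1" b] subring_1[of S] subring_uminus[of S]
  by simp

lemma ideal_sum: "(\<And>x. x \<in> A \<Longrightarrow> g x \<in> I) \<Longrightarrow> sum g A \<in> I"
  by (induction A rule: infinite_finite_induct) (simp_all add: ideal_0 ideal_add)

end

text \<open>Only meaningful for finite \<open>F\<close>: infinite sums are \<open>0\<close>.\<close>
definition ideal_gen :: "'a::comm_ring_1 set \<Rightarrow> 'a set \<Rightarrow> 'a set" where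
  "ideal_gen S F = {(\<Sum>f\<in>F. c f * f) | c. \<forall>f\<in>F. c f \<in> S}"

lemma is_ideal_ideal_gen:
  assumes S: "is_subring S" and F: "F \<subseteq> S"
  shows "is_ideal S (ideal_gen S F)"
  unfolding is_ideal_def
proof (intro conjI ballI subsetI)
  fix a assume "a \<in> ideal_gen S F"
  then obtain c where "a = (\<Sum>f\<in>F. c f * f)" and "\<forall>f\<in>F. c f \<in> S"
    unfolding ideal_gen_def by auto
  then show "a \<in> S"
    using F by (auto intro!: subring_sum[OF S] subring_mult[OF S])
next
  show "0 \<in> ideal_gen S F"
    unfolding ideal_gen_def using subring_0[OF S] by (auto intro!: exI[of _ "\<lambda>_. 0"])
next
  fix a b assume "a \<in> ideal_gen S F" "b \<in> ideal_gen S F"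
  then obtain c c' where "a = (\<Sum>f\<in>F. c f * f)" "\<forall>f\<in>F. c f \<in> S"
    and "b = (\<Sum>f\<in>F. c' f * f)" "\<forall>f\<in>F. c' f \<in> S"
    unfolding ideal_gen_def by auto
  then show "a + b \<in> ideal_gen S F"
    unfolding ideal_gen_def using subring_add[OF S]
    by (auto simp: sum.distrib distrib_right intro!: exI[of _ "\<lambda>f. c f + c' f"])
next
  fix s a assume "s \<in> S" "a \<in> ideal_gen S F"
  then obtain c where "a = (\<Sum>f\<in>F. c f * f)" "\<forall>f\<in>F. c f \<in> S"
    unfolding ideal_gen_def by auto
  then show "s * a \<in> ideal_gen S F"
    unfolding ideal_gen_def using \<open>s \<in> S\<close> subring_mult[OF S]
    by (auto simp: sum_distrib_left mult.assoc intro!: exI[of _ "\<lambda>f. s * c f"])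
qed

lemma ideal_gen_subset:
  assumes "is_ideal S I" "F \<subseteq> I"
  shows "ideal_gen S F \<subseteq> I"
  unfolding ideal_gen_def using assms
  by (auto intro!: ideal_sum[OF assms(1)] ideal_mult[OF assms(1)])

lemma generators_subset_ideal_gen:
  assumes S: "is_subring S" and "finite F"
  shows "F \<subseteq> ideal_gen S F"
proof
  fix f assume "f \<in> F"
  have "(\<Sum>g\<in>F. (if g = f then 1 else 0) * g) = (\<Sum>g\<in>F. if g = f then g else 0)"
    by (rule sum.cong) auto
  also have "\<dots> = f"
    using \<open>finite F\<close> \<open>f \<in> F\<close> by simp
  finally have "(\<Sum>g\<in>F. (if g = f then 1 else 0) * g) = f" .
  then show "f \<in> ideal_gen S F"
    unfolding ideal_gen_def using subring_0[OF S] subring_1[OF S]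
    by (intro CollectI exI[of _ "\<lambda>g. if g = f then 1 else 0"]) auto
qed

definition noetherian :: "'a::comm_ring_1 set \<Rightarrow> bool" where
  "noetherian S \<longleftrightarrow> (\<forall>I. is_ideal S I \<longrightarrow> (\<exists>F. finite F \<and> F \<subseteq> I \<and> I = ideal_gen S F))"

lemma noetherianE:
  assumes "noetherian S" "is_ideal S I"
  obtains F where "finite F" "F \<subseteq> I" "I = ideal_gen S F"
  using assms unfolding noetherian_def by blast

lemma is_ideal_UN_chain:
  fixes J :: "nat \<Rightarrow> 'a::comm_ring_1 set"
  assumes "\<And>n. is_ideal S (J n)" and "mono J"
  shows "is_ideal S (\<Union>n. J n)"
  unfolding is_ideal_def
proof (intro conjI ballI)
  fix a b assume "a \<in> (\<Union>n. J n)" "b \<in> (\<Union>n. J n)"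
  then obtain m n where "a \<in> J m" "b \<in> J n" by auto
  moreover have "J m \<subseteq> J (max m n)" by (rule monoD[OF \<open>mono J\<close>]) simp
  moreover have "J n \<subseteq> J (max m n)" by (rule monoD[OF \<open>mono J\<close>]) simp
  ultimately have "a \<in> J (max m n)" "b \<in> J (max m n)"
    by blast+
  then show "a + b \<in> (\<Union>n. J n)" using ideal_add[OF assms(1)] by blast
next
  fix s a assume "s \<in> S" "a \<in> (\<Union>n. J n)"
  then show "s * a \<in> (\<Union>n. J n)" using ideal_mult[OF assms(1)] by blast
next
  show "(\<Union>n. J n) \<subseteq> S" using ideal_subset[OF assms(1)] by blast
  show "0 \<in> (\<Union>n. J n)" using ideal_0[OF assms(1)] by blast
qed

lemma noetherian_chain_stabilizes:
  fixes J :: "nat \<Rightarrow> 'a::comm_ring_1 set"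
  assumes N: "noetherian S" and J: "\<And>n. is_ideal S (J n)" and "mono J"
  obtains N where "\<And>n. J n \<subseteq> J N"
proof -
  obtain F where F: "finite F" "F \<subseteq> (\<Union>n. J n)" "(\<Union>n. J n) = ideal_gen S F"
    using noetherianE[OF N is_ideal_UN_chain[OF J \<open>mono J\<close>]] .
  have "\<forall>f\<in>F. \<exists>n. f \<in> J n" using F(2) by blast
  then obtain k where k: "\<forall>f\<in>F. f \<in> J (k f)"
    by (auto dest: bchoice)
  have "F \<subseteq> J (Max (k ` F))"
  proof
    fix f assume "f \<in> F"
    have "J (k f) \<subseteq> J (Max (k ` F))"
      by (rule monoD[OF \<open>mono J\<close>]) (simp add: F(1) \<open>f \<in> F\<close>)
    then show "f \<in> J (Max (k ` F))" using k \<open>f \<in> F\<close> by blast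
  qed
  then have "(\<Union>n. J n) \<subseteq> J (Max (k ` F))"
    unfolding F(3) by (rule ideal_gen_subset[OF J])
  then show thesis by (intro that) blast
qed

lemma noetherian_image:
  assumes S: "is_subring S" and N: "noetherian S" and f: "is_ring_hom f"
  shows "noetherian (f ` S)"
  unfolding noetherian_def
proof (intro allI impI)
  fix I assume I: "is_ideal (f ` S) I"
  have fS: "is_subring (f ` S)" by (rule is_subring_image[OF S f])
  define P where "P = {s \<in> S. f s \<in> I}"
  have "is_ideal S P"
    unfolding is_ideal_def
  proof (intro conjI ballI)
    show "0 \<in> P" using subring_0[OF S] ideal_0[OF I] by (simp add: P_def ring_hom_0[OF f])
  next
    fix a b assume "a \<in> P" "b \<in> P"
    then show "a + b \<in> P"
      using subring_add[OF S] ideal_add[OF I] by (simp add: P_def ring_hom_add[OF f])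
  next
    fix s a assume "s \<in> S" "a \<in> P"
    then show "s * a \<in> P"
      using subring_mult[OF S] ideal_mult[OF I] by (simp add: P_def ring_hom_mult[OF f])
  qed (auto simp: P_def)
  then obtain F where F: "finite F" "F \<subseteq> P" "P = ideal_gen S F"
    using noetherianE[OF N] by blast
  have fF: "f ` F \<subseteq> I" using F(2) unfolding P_def by auto
  have fFI: "is_ideal (f ` S) (ideal_gen (f ` S) (f ` F))"
    using fF ideal_subset[OF I] by (intro is_ideal_ideal_gen[OF fS]) (rule order_trans)
  have "I \<subseteq> ideal_gen (f ` S) (f ` F)"
  proof
    fix y assume "y \<in> I"
    then obtain s where "s \<in> S" "y = f s" using ideal_subset[OF I] by blast
    then have "s \<in> P" unfolding P_def using \<open>y \<in> I\<close> by simp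
    then have "s \<in> ideal_gen S F" unfolding F(3) .
    then obtain c where c: "s = (\<Sum>x\<in>F. c x * x)" "\<forall>x\<in>F. c x \<in> S"
      unfolding ideal_gen_def by blast
    have "y = (\<Sum>x\<in>F. f (c x) * f x)"
      unfolding \<open>y = f s\<close> c(1) by (simp add: ring_hom_sum[OF f] ring_hom_mult[OF f])
    also have "\<dots> \<in> ideal_gen (f ` S) (f ` F)"
    proof (intro ideal_sum[OF fFI] ideal_mult[OF fFI])
      fix x assume "x \<in> F"
      then show "f (c x) \<in> f ` S" using c(2) by blast
      show "f x \<in> ideal_gen (f ` S) (f ` F)"
        using generators_subset_ideal_gen[OF fS] F(1) \<open>x \<in> F\<close> by blast
    qed
    finally show "y \<in> ideal_gen (f ` S) (f ` F)" .
  qed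
  moreover have "ideal_gen (f ` S) (f ` F) \<subseteq> I"
    by (rule ideal_gen_subset[OF I fF])
  ultimately show "\<exists>G. finite G \<and> G \<subseteq> I \<and> I = ideal_gen (f ` S) G"
    using F(1) fF by blast
qed

lemma noetherian_field: "noetherian (UNIV :: 'k::field set)"
  unfolding noetherian_def
proof (intro allI impI)
  fix I :: "'k set" assume I: "is_ideal UNIV I"
  show "\<exists>F. finite F \<and> F \<subseteq> I \<and> I = ideal_gen UNIV F"
  proof (cases "I \<subseteq> {0}")
    case True
    then have "I = ideal_gen UNIV {}" using ideal_0[OF I] by (auto simp: ideal_gen_def)
    then show ?thesis by blast
  next
    case False
    then obtain a where "a \<in> I" "a \<noteq> 0" by blast
    then have "y \<in> I" for y using ideal_mult[OF I, of "y / a" a] by simp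
    moreover have "ideal_gen UNIV {1} = (UNIV :: 'k set)" by (auto simp: ideal_gen_def)
    ultimately show ?thesis by (intro exI[of _ "{1}"]) auto
  qed
qed

section \<open>Hilbert's basis theorem\<close>

definition poly_over :: "'a::comm_ring_1 set \<Rightarrow> 'a poly set" where
  "poly_over S = {p. \<forall>i. coeff p i \<in> S}"

lemma is_subring_poly_over:
  assumes S: "is_subring S"
  shows "is_subring (poly_over S)"
  unfolding is_subring_def poly_over_def
proof (intro conjI ballI CollectI allI)
  fix p q :: "'a poly" and i
  assume "p \<in> {p. \<forall>i. coeff p i \<in> S}" "q \<in> {p. \<forall>i. coeff p i \<in> S}"
  then have p: "\<And>i. coeff p i \<in> S" and q: "\<And>i. coeff q i \<in> S" by auto
  show "coeff (p + q) i \<in> S" using subring_add[OF S p q] by simp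
  show "coeff (p * q) i \<in> S"
    unfolding coeff_mult by (intro subring_sum[OF S] subring_mult[OF S p q])
  show "coeff (- p) i \<in> S" using subring_uminus[OF S p] by simp
qed (simp_all add: coeff_1 subring_0[OF S] subring_1[OF S])

lemma monom_in_poly_over: "is_subring S \<Longrightarrow> s \<in> S \<Longrightarrow> monom s k \<in> poly_over S"
  unfolding poly_over_def by (simp add: subring_0)

definition lead_coeffs :: "'a::comm_ring_1 poly set \<Rightarrow> nat \<Rightarrow> 'a set" where
  "lead_coeffs P d = {coeff p d | p. p \<in> P \<and> degree p \<le> d}"

context
  fixes S :: "'a::comm_ring_1 set" and P :: "'a poly set"
  assumes S: "is_subring S" and P: "is_ideal (poly_over S) P"
begin

lemma is_ideal_lead_coeffs: "is_ideal S (lead_coeffs P d)"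
  unfolding is_ideal_def
proof (intro conjI ballI subsetI)
  fix a assume "a \<in> lead_coeffs P d"
  then show "a \<in> S"
    using ideal_subset[OF P] unfolding lead_coeffs_def poly_over_def by auto
next
  show "0 \<in> lead_coeffs P d"
    unfolding lead_coeffs_def using ideal_0[OF P] by force
next
  fix a b assume "a \<in> lead_coeffs P d" "b \<in> lead_coeffs P d"
  then obtain p q where "p \<in> P" "degree p \<le> d" "a = coeff p d"
    and "q \<in> P" "degree q \<le> d" "b = coeff q d"
    unfolding lead_coeffs_def by blast
  then show "a + b \<in> lead_coeffs P d"
    unfolding lead_coeffs_def using ideal_add[OF P] degree_add_le
    by (intro CollectI exI[of _ "p + q"]) auto
next
  fix s a assume "s \<in> S" "a \<in> lead_coeffs P d"
  then obtain p where "p \<in> P" "degree p \<le> d" "a = coeff p d"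
    unfolding lead_coeffs_def by blast
  then show "s * a \<in> lead_coeffs P d"
    unfolding lead_coeffs_def
    using ideal_mult[OF P monom_in_poly_over[OF S \<open>s \<in> S\<close>, of 0]] degree_smult_le[of s p]
    by (intro CollectI exI[of _ "monom s 0 * p"]) (auto simp: monom_0)
qed

lemma mono_lead_coeffs: "mono (lead_coeffs P)"
  unfolding mono_iff_le_Suc
proof (intro allI subsetI)
  fix d a assume "a \<in> lead_coeffs P d"
  then obtain p where "p \<in> P" "degree p \<le> d" "a = coeff p d"
    unfolding lead_coeffs_def by blast
  moreover have "degree (monom 1 1 * p) \<le> Suc d"
    using degree_mult_le[of "monom 1 1" p] degree_monom_le[of "1::'a" 1] \<open>degree p \<le> d\<close> by linarith
  ultimately show "a \<in> lead_coeffs P (Suc d)"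
    unfolding lead_coeffs_def
    using ideal_mult[OF P monom_in_poly_over[OF S subring_1[OF S]]]
    by (intro CollectI exI[of _ "monom 1 1 * p"]) (simp add: coeff_monom_mult)
qed

lemma ideal_poly_over_eq_ideal_gen:
  assumes G: "G \<subseteq> P" "finite G"
    and match: "\<And>p. p \<in> P \<Longrightarrow>
      \<exists>r\<in>ideal_gen (poly_over S) G. degree r \<le> degree p \<and> coeff r (degree p) = lead_coeff p"
  shows "P = ideal_gen (poly_over S) G"
proof
  show "ideal_gen (poly_over S) G \<subseteq> P" by (rule ideal_gen_subset[OF P G(1)])
  have SP: "is_subring (poly_over S)" by (rule is_subring_poly_over[OF S])
  have I: "is_ideal (poly_over S) (ideal_gen (poly_over S) G)"
    using G(1) ideal_subset[OF P] by (intro is_ideal_ideal_gen[OF SP]) blast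
  show "P \<subseteq> ideal_gen (poly_over S) G"
  proof
    fix p assume "p \<in> P"
    then show "p \<in> ideal_gen (poly_over S) G"
    proof (induction "degree p" arbitrary: p rule: less_induct)
      case less
      obtain r where r: "r \<in> ideal_gen (poly_over S) G" "degree r \<le> degree p"
        "coeff r (degree p) = lead_coeff p"
        using match[OF less.prems] by blast
      define q where "q = p - r"
      have "q \<in> P"
        unfolding q_def using r(1) ideal_gen_subset[OF P G(1)] less.prems
        by (intro ideal_diff[OF P SP]) auto
      have "degree q \<le> degree p" "coeff q (degree p) = 0"
        unfolding q_def using degree_diff_le[OF order.refl r(2)] r(3) by simp_all
      then have "q = 0 \<or> degree q < degree p"
        using leading_coeff_0_iff[of q] le_neq_implies_less by metis
      then have "q \<in> ideal_gen (poly_over S) G"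
        using less.hyps[OF _ \<open>q \<in> P\<close>] ideal_0[OF I] by blast
      from ideal_add[OF I this r(1)] show "p \<in> ideal_gen (poly_over S) G"
        unfolding q_def by simp
    qed
  qed
qed

end

lemma lift_lead_coeff:
  assumes S: "is_subring S" and G: "G \<subseteq> poly_over S" "finite G"
    and "finite E" and c: "c \<in> ideal_gen S E" and "d \<le> m"
    and lift: "\<And>e. e \<in> E \<Longrightarrow> \<exists>g\<in>G. degree g \<le> d \<and> coeff g d = e"
  shows "\<exists>r\<in>ideal_gen (poly_over S) G. degree r \<le> m \<and> coeff r m = c"
proof -
  obtain s where s: "c = (\<Sum>e\<in>E. s e * e)" "\<And>e. e \<in> E \<Longrightarrow> s e \<in> S"
    using c unfolding ideal_gen_def by blast
  have "\<forall>e\<in>E. \<exists>g. g \<in> G \<and> degree g \<le> d \<and> coeff g d = e" using lift by blast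
  from bchoice[OF this] obtain g
    where g: "\<forall>e\<in>E. g e \<in> G \<and> degree (g e) \<le> d \<and> coeff (g e) d = e"
    by blast
  define r where "r = (\<Sum>e\<in>E. monom (s e) (m - d) * g e)"
  have SP: "is_subring (poly_over S)" by (rule is_subring_poly_over[OF S])
  have I: "is_ideal (poly_over S) (ideal_gen (poly_over S) G)"
    by (rule is_ideal_ideal_gen[OF SP G(1)])
  have "r \<in> ideal_gen (poly_over S) G"
    unfolding r_def
  proof (intro ideal_sum[OF I] ideal_mult[OF I] monom_in_poly_over[OF S])
    fix e assume "e \<in> E"
    then show "s e \<in> S" by (rule s(2))
    show "g e \<in> ideal_gen (poly_over S) G"
      using g \<open>e \<in> E\<close> generators_subset_ideal_gen[OF SP G(2)] by blast
  qed
  moreover have "degree r \<le> m"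
    unfolding r_def
  proof (intro degree_sum_le[OF \<open>finite E\<close>] order.trans[OF degree_mult_le])
    fix e assume "e \<in> E"
    then have "degree (g e) \<le> d" using g by blast
    then show "degree (monom (s e) (m - d)) + degree (g e) \<le> m"
      using degree_monom_le[of "s e" "m - d"] \<open>d \<le> m\<close> by linarith
  qed
  moreover have "coeff r m = c"
    unfolding r_def s(1) coeff_sum
  proof (rule sum.cong)
    fix e assume "e \<in> E"
    then have "coeff (g e) d = e" using g by blast
    then show "coeff (monom (s e) (m - d) * g e) m = s e * e"
      using \<open>d \<le> m\<close> by (simp add: coeff_monom_mult)
  qed simp
  ultimately show ?thesis by blast
qed

theorem noetherian_poly_over:
  assumes S: "is_subring S" and N: "noetherian S"
  shows "noetherian (poly_over S)"
  unfolding noetherian_def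
proof (intro allI impI)
  fix P assume P: "is_ideal (poly_over S) P"
  obtain D where D: "\<And>n. lead_coeffs P n \<subseteq> lead_coeffs P D"
    using noetherian_chain_stabilizes[OF N is_ideal_lead_coeffs[OF S P] mono_lead_coeffs[OF S P]]
    by blast
  have "\<exists>F. finite F \<and> F \<subseteq> lead_coeffs P d \<and> lead_coeffs P d = ideal_gen S F" for d
    by (rule noetherianE[OF N is_ideal_lead_coeffs[OF S P]]) blast
  then have "\<forall>d. \<exists>F. finite F \<and> F \<subseteq> lead_coeffs P d \<and> lead_coeffs P d = ideal_gen S F" ..
  from choice[OF this] obtain E
    where "\<forall>d. finite (E d) \<and> E d \<subseteq> lead_coeffs P d \<and> lead_coeffs P d = ideal_gen S (E d)"
    by blast
  then have E: "\<And>d. finite (E d)" "\<And>d. E d \<subseteq> lead_coeffs P d"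
    "\<And>d. lead_coeffs P d = ideal_gen S (E d)"
    by blast+
  define lift where "lift d e = (SOME g. g \<in> P \<and> degree g \<le> d \<and> coeff g d = e)" for d e
  have lift: "lift d e \<in> P \<and> degree (lift d e) \<le> d \<and> coeff (lift d e) d = e"
    if "e \<in> lead_coeffs P d" for d e
  proof -
    from that obtain p where "p \<in> P \<and> degree p \<le> d \<and> coeff p d = e"
      unfolding lead_coeffs_def by blast
    then show ?thesis unfolding lift_def by (rule someI)
  qed
  define G where "G = (\<Union>d\<le>D. lift d ` E d)"
  have "finite G" unfolding G_def using E(1) by simp
  have "G \<subseteq> P"
    unfolding G_def using lift E(2) by blast
  then have "G \<subseteq> poly_over S" using ideal_subset[OF P] by (rule order_trans)
  have "P = ideal_gen (poly_over S) G"
  proof (rule ideal_poly_over_eq_ideal_gen[OF S P \<open>G \<subseteq> P\<close> \<open>finite G\<close>])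
    fix p assume "p \<in> P"
    define d where "d = min (degree p) D"
    have "lead_coeff p \<in> lead_coeffs P (degree p)"
      unfolding lead_coeffs_def using \<open>p \<in> P\<close> by blast
    also have "lead_coeffs P (degree p) \<subseteq> lead_coeffs P d"
      unfolding d_def using D by (cases "degree p \<le> D") auto
    finally have "lead_coeff p \<in> ideal_gen S (E d)" unfolding E(3) .
    moreover have "d \<le> degree p" unfolding d_def by simp
    moreover have "\<exists>g\<in>G. degree g \<le> d \<and> coeff g d = e" if "e \<in> E d" for e
    proof
      show "lift d e \<in> G" unfolding G_def d_def using that by (auto simp: d_def)
      show "degree (lift d e) \<le> d \<and> coeff (lift d e) d = e" using lift that E(2) by blast
    qed
    ultimately show "\<exists>r\<in>ideal_gen (poly_over S) G. degree r \<le> degree p \<and> coeff r (degree p) = lead_coeff p"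
      by (rule lift_lead_coeff[OF S \<open>G \<subseteq> poly_over S\<close> \<open>finite G\<close> E(1)])
  qed
  then show "\<exists>G. finite G \<and> G \<subseteq> P \<and> P = ideal_gen (poly_over S) G"
    using \<open>finite G\<close> \<open>G \<subseteq> P\<close> by blast
qed

definition adjoin :: "'a::comm_ring_1 set \<Rightarrow> 'a \<Rightarrow> 'a set" where
  "adjoin S a = (\<lambda>p. poly p a) ` poly_over S"

lemma is_ring_hom_poly: "is_ring_hom (\<lambda>p. poly p a)"
  unfolding is_ring_hom_def by simp

lemma is_subring_adjoin: "is_subring S \<Longrightarrow> is_subring (adjoin S a)"
  unfolding adjoin_def by (intro is_subring_image is_subring_poly_over is_ring_hom_poly)

lemma noetherian_adjoin: "is_subring S \<Longrightarrow> noetherian S \<Longrightarrow> noetherian (adjoin S a)"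
  unfolding adjoin_def
  by (intro noetherian_image is_subring_poly_over noetherian_poly_over is_ring_hom_poly)

section \<open>Finitely generated algebras over a field are Noetherian\<close>

lemma alg_gen_subset:
  assumes T: "is_subring T" and "S \<subseteq> T" "range \<iota> \<subseteq> T"
  shows "alg_gen \<iota> S \<subseteq> T"
proof
  fix x assume "x \<in> alg_gen \<iota> S"
  then show "x \<in> T"
    by induction (use assms in \<open>auto intro: subring_add[OF T] subring_uminus[OF T] subring_mult[OF T]\<close>)
qed

locale field_algebra =
  fixes \<iota> :: "'k::field \<Rightarrow> 'a::comm_ring_1"
  assumes ring_hom_map: "ring_hom_map \<iota>"
begin

lemma is_ring_hom: "is_ring_hom \<iota>"
  using ring_hom_map by (simp add: ring_hom_map_iff_is_ring_hom)

lemma is_subring_alg_gen: "is_subring (alg_gen \<iota> G)"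
  unfolding is_subring_def
  using alg_gen.gen_const[of \<iota> 0 G] alg_gen.gen_const[of \<iota> 1 G]
  by (simp add: ring_hom_0[OF is_ring_hom] ring_hom_1[OF is_ring_hom]
      alg_gen.gen_add alg_gen.gen_mult alg_gen.gen_uminus)

lemma alg_gen_empty: "alg_gen \<iota> {} = range \<iota>"
proof
  show "alg_gen \<iota> {} \<subseteq> range \<iota>"
    using is_subring_image[OF is_subring_UNIV is_ring_hom] by (rule alg_gen_subset) auto
  show "range \<iota> \<subseteq> alg_gen \<iota> {}"
    by (auto intro: alg_gen.gen_const)
qed

lemma alg_gen_insert: "alg_gen \<iota> (insert g G) = adjoin (alg_gen \<iota> G) g"
proof
  let ?A = "alg_gen \<iota> G"
  have A: "is_subring ?A" by (rule is_subring_alg_gen)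
  have const: "s \<in> adjoin ?A g" if "s \<in> ?A" for s
    unfolding adjoin_def using monom_in_poly_over[OF A that, of 0]
    by (intro image_eqI[of _ _ "monom s 0"]) (simp_all add: monom_0)
  have "g \<in> adjoin ?A g"
    unfolding adjoin_def using monom_in_poly_over[OF A subring_1[OF A], of 1]
    by (intro image_eqI[of _ _ "monom 1 1"]) (simp_all add: poly_monom)
  then show "alg_gen \<iota> (insert g G) \<subseteq> adjoin ?A g"
    using const alg_gen.gen_base[of _ G \<iota>] alg_gen.gen_const[of \<iota> _ G]
    by (intro alg_gen_subset is_subring_adjoin[OF A]) auto
  have B: "is_subring (alg_gen \<iota> (insert g G))" by (rule is_subring_alg_gen)
  have "?A \<subseteq> alg_gen \<iota> (insert g G)"
    using alg_gen.gen_base[of _ "insert g G" \<iota>] alg_gen.gen_const[of \<iota> _ "insert g G"]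
    by (intro alg_gen_subset[OF B]) auto
  moreover have "g \<in> alg_gen \<iota> (insert g G)" by (simp add: alg_gen.gen_base)
  ultimately show "adjoin ?A g \<subseteq> alg_gen \<iota> (insert g G)"
    unfolding adjoin_def poly_over_def poly_altdef
    by (auto intro!: subring_sum[OF B] subring_mult[OF B] subring_power[OF B])
qed

lemma noetherian_alg_gen: "finite G \<Longrightarrow> noetherian (alg_gen \<iota> G)"
proof (induction G rule: finite_induct)
  case empty
  show ?case
    unfolding alg_gen_empty
    by (rule noetherian_image[OF is_subring_UNIV noetherian_field is_ring_hom])
next
  case (insert g G)
  show ?case
    unfolding alg_gen_insert by (rule noetherian_adjoin[OF is_subring_alg_gen insert.IH])
qed

end

section \<open>Derivations and the modified Derksen invariant\<close>

lemma is_derivation_diff: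
  "is_derivation \<iota> D\<^sub>1 \<Longrightarrow> is_derivation \<iota> D\<^sub>2 \<Longrightarrow> is_derivation \<iota> (\<lambda>a. D\<^sub>1 a - D\<^sub>2 a)"
  unfolding is_derivation_def by (simp add: algebra_simps)

lemma is_derivation_mult_left:
  "is_derivation \<iota> D \<Longrightarrow> is_derivation \<iota> (\<lambda>a. c * D a)"
  unfolding is_derivation_def by (simp add: algebra_simps)

lemma is_derivation_pderiv:
  fixes \<iota> :: "'k \<Rightarrow> 'a::idom"
  shows "is_derivation (\<lambda>c. [:\<iota> c:]) pderiv"
  unfolding is_derivation_def by (simp add: pderiv_add pderiv_mult pderiv_pCons)

lemma pderiv_in_LND_star:
  fixes \<iota> :: "'k \<Rightarrow> 'a::idom"
  shows "pderiv \<in> LND_star (\<lambda>c. [:\<iota> c:])"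
proof -
  have "(pderiv ^^ Suc (degree p)) p = 0" for p :: "'a poly"
    by (rule poly_eqI) (simp del: funpow.simps add: coeff_higher_pderiv coeff_eq_0)
  moreover have "pderiv [:0, 1:] = (1 :: 'a poly)" by (simp add: pderiv_pCons)
  ultimately show ?thesis
    unfolding LND_star_def is_LND_def using is_derivation_pderiv by blast
qed

lemma kernel_subset_HD_star: "D \<in> LND_star \<iota> \<Longrightarrow> D a = 0 \<Longrightarrow> a \<in> HD_star \<iota>"
  unfolding HD_star_def by (intro alg_gen.gen_base) blast

lemma const_mem_HD_star:
  fixes b :: "'a::idom"
  shows "[:b:] \<in> HD_star (\<lambda>c. [:\<iota> c:])"
  by (rule kernel_subset_HD_star[OF pderiv_in_LND_star]) (simp add: pderiv_pCons)

context
  fixes \<iota> :: "'k \<Rightarrow> 'r::comm_ring_1" and \<sigma> \<tau> :: "'r \<Rightarrow> 'r"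
  assumes hom: "is_ring_hom \<sigma>"
    and inverse: "\<And>a. \<sigma> (\<tau> a) = a" "\<And>a. \<tau> (\<sigma> a) = a"
    and fixes_const: "\<And>c. \<sigma> (\<iota> c) = \<iota> c"
begin

lemma is_ring_hom_inverse: "is_ring_hom \<tau>"
  unfolding is_ring_hom_def
  by (metis inverse ring_hom_1[OF hom] ring_hom_add[OF hom] ring_hom_mult[OF hom])

lemma conjugate_in_LND_star:
  assumes "D \<in> LND_star \<iota>"
  shows "(\<lambda>a. \<sigma> (D (\<tau> a))) \<in> LND_star \<iota>"
proof -
  from assms obtain s where der: "is_derivation \<iota> D" and nil: "\<And>a. \<exists>n. (D ^^ n) a = 0"
    and "D s = 1"
    unfolding LND_star_def is_LND_def by blast
  have "\<tau> (\<iota> c) = \<iota> c" for c by (metis fixes_const inverse(2))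
  then have "is_derivation \<iota> (\<lambda>a. \<sigma> (D (\<tau> a)))"
    using der
    unfolding is_derivation_def
    by (simp add: ring_hom_add[OF hom] ring_hom_mult[OF hom] ring_hom_0[OF hom]
        ring_hom_add[OF is_ring_hom_inverse] ring_hom_mult[OF is_ring_hom_inverse] inverse)
  moreover have "((\<lambda>a. \<sigma> (D (\<tau> a))) ^^ n) a = \<sigma> ((D ^^ n) (\<tau> a))" for n a
    by (induction n) (simp_all add: inverse)
  then have "\<exists>n. ((\<lambda>a. \<sigma> (D (\<tau> a))) ^^ n) a = 0" for a
    using nil[of "\<tau> a"] ring_hom_0[OF hom] by metis
  moreover have "\<sigma> (D (\<tau> (\<sigma> s))) = 1"
    using \<open>D s = 1\<close> by (simp add: inverse ring_hom_1[OF hom])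
  ultimately show ?thesis
    unfolding LND_star_def is_LND_def by blast
qed

lemma image_HD_star: "p \<in> HD_star \<iota> \<Longrightarrow> \<sigma> p \<in> HD_star \<iota>"
  unfolding HD_star_def
proof (induction p rule: alg_gen.induct)
  case (gen_base a)
  then obtain D where "D \<in> LND_star \<iota>" "D a = 0" by blast
  then have "(\<lambda>a. \<sigma> (D (\<tau> a))) \<in> LND_star \<iota>" "\<sigma> (D (\<tau> (\<sigma> a))) = 0"
    by (simp_all add: conjugate_in_LND_star inverse ring_hom_0[OF hom])
  then show ?case by (blast intro: alg_gen.gen_base)
next
  case (gen_const c)
  then show ?case by (simp add: fixes_const alg_gen.gen_const)
qed (simp_all add: ring_hom_add[OF hom] ring_hom_mult[OF hom] ring_hom_uminus[OF hom]
    alg_gen.gen_add alg_gen.gen_mult alg_gen.gen_uminus)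

end

lemma pcompose_affine_mem_HD_star:
  fixes \<iota> :: "'k \<Rightarrow> 'a::comm_ring_1"
  assumes "a * a' = 1" and "p \<in> HD_star (\<lambda>c. [:\<iota> c:])"
  shows "pcompose p [:b, a:] \<in> HD_star (\<lambda>c. [:\<iota> c:])"
proof (rule image_HD_star[where \<sigma> = "\<lambda>p. pcompose p [:b, a:]" and \<tau> = "\<lambda>p. pcompose p [:- b * a', a':]"])
  have inv: "a * (a' * x) = x" "a' * (a * x) = x" for x
    using \<open>a * a' = 1\<close> by (simp_all flip: mult.assoc add: mult.commute[of a' a])
  have "pcompose [:- b * a', a':] [:b, a:] = [:0, 1:]"
    "pcompose [:b, a:] [:- b * a', a':] = [:0, 1:]"
    using \<open>a * a' = 1\<close> by (simp_all add: pcompose_pCons algebra_simps inv)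
  then show "pcompose (pcompose q [:- b * a', a':]) [:b, a:] = q"
    "pcompose (pcompose q [:b, a:]) [:- b * a', a':] = q" for q
    by (simp_all flip: pcompose_assoc)
  show "is_ring_hom (\<lambda>p. pcompose p [:b, a:])"
    unfolding is_ring_hom_def by (simp add: pcompose_1 pcompose_add pcompose_mult)
qed (simp_all add: assms)

section \<open>Locally nilpotent derivations of a polynomial ring\<close>

locale lnd =
  fixes \<iota> :: "'k \<Rightarrow> 'r::idom" and D :: "'r \<Rightarrow> 'r"
  assumes is_LND: "is_LND \<iota> D"
begin

lemma D_add: "D (a + b) = D a + D b"
  and D_mult: "D (a * b) = a * D b + b * D a"
  and D_const: "D (\<iota> c) = 0"
  and nilpotent: "\<exists>n. (D ^^ n) a = 0"
  using is_LND unfolding is_LND_def is_derivation_def by auto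

lemma D_0: "D 0 = 0"
  using D_add[of 0 0] by (metis add_cancel_right_right add_0)

lemma D_diff: "D (a - b) = D a - D b"
  using D_add[of "a - b" b] by simp

lemma D_1: "D 1 = 0"
  using D_mult[of 1 1] by (metis add_cancel_right_right mult_1 mult_1_right)

lemma D_sum: "D (sum f A) = (\<Sum>x\<in>A. D (f x))"
  using sum_comp_morphism[of D f A] by (simp add: D_0 D_add o_def)

lemma D_of_nat: "D (of_nat n) = 0"
  by (induction n) (simp_all add: D_0 D_1 D_add)

lemma funpow_D_0: "(D ^^ k) 0 = 0"
  by (induction k) (simp_all add: D_0)

lemma funpow_D_diff: "(D ^^ k) (a - b) = (D ^^ k) a - (D ^^ k) b"
  by (induction k) (simp_all add: D_diff)

lemma funpow_D_of_nat_mult: "(D ^^ k) (of_nat j * a) = of_nat j * (D ^^ k) a"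
  by (induction k) (simp_all add: D_mult D_of_nat)

lemma funpow_D_eq_0_mono: "(D ^^ k) a = 0 \<Longrightarrow> k \<le> l \<Longrightarrow> (D ^^ l) a = 0"
  by (metis funpow_D_0 funpow_add le_add_diff_inverse2 o_apply)

lemma exists_local_slice:
  assumes "D b \<noteq> 0"
  shows "\<exists>g. D g \<noteq> 0 \<and> D (D g) = 0"
proof -
  obtain n where "(D ^^ n) b = 0" using nilpotent by blast
  then show ?thesis
    using assms
  proof (induction n arbitrary: b)
    case (Suc n)
    show ?case
    proof (cases "D (D b) = 0")
      case False
      have "(D ^^ n) (D b) = 0"
        using Suc.prems(1) by (simp del: funpow.simps add: funpow_Suc_right)
      then show ?thesis using False by (rule Suc.IH)
    qed (use Suc.prems(2) in blast)
  qed (simp add: D_0)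
qed

lemma is_derivation_map_poly: "is_derivation (\<lambda>c. [:\<iota> c:]) (map_poly D)"
  unfolding is_derivation_def
proof (intro conjI allI)
  fix p q :: "'r poly"
  show "map_poly D (p + q) = map_poly D p + map_poly D q"
    by (rule poly_eqI) (simp add: coeff_map_poly D_0 D_add)
  show "map_poly D (p * q) = p * map_poly D q + q * map_poly D p"
  proof (rule poly_eqI)
    fix k
    have "coeff (map_poly D (p * q)) k
        = (\<Sum>i\<le>k. coeff p i * D (coeff q (k - i))) + (\<Sum>i\<le>k. D (coeff p i) * coeff q (k - i))"
      by (simp add: coeff_map_poly D_0 coeff_mult D_sum D_mult sum.distrib mult.commute)
    then show "coeff (map_poly D (p * q)) k = coeff (p * map_poly D q + q * map_poly D p) k"
      by (simp add: coeff_mult coeff_map_poly D_0 mult.commute[of q])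
  qed
  fix c
  show "map_poly D [:\<iota> c:] = 0"
    by (simp add: map_poly_pCons D_0 D_const)
qed

definition twisted_pderiv :: "nat \<Rightarrow> 'r poly \<Rightarrow> 'r poly" where
  "twisted_pderiv m p = pderiv p - monom 1 m * map_poly D p"

lemma coeff_twisted_pderiv: "coeff (twisted_pderiv m p) i =
    of_nat (Suc i) * coeff p (Suc i) - (if i < m then 0 else D (coeff p (i - m)))"
  unfolding twisted_pderiv_def by (simp add: coeff_pderiv coeff_monom_mult coeff_map_poly D_0)

text \<open>\<open>weight_less m w p\<close> says that every term \<open>c x\<^sup>i\<close> of \<open>p\<close> with \<open>c \<noteq> 0\<close> has weight
  \<open>i + (m + 1) \<nu>(c) < w\<close>, where \<open>\<nu>(c)\<close> is the least \<open>k\<close> with \<open>D\<^bsup>k+1\<^esup> c = 0\<close>. Both \<open>pderiv\<close> and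
  \<open>x\<^sup>m D\<close> lower weights by one, which makes \<open>twisted_pderiv m\<close> locally nilpotent.\<close>
definition weight_less :: "nat \<Rightarrow> nat \<Rightarrow> 'r poly \<Rightarrow> bool" where
  "weight_less m w p \<longleftrightarrow> (\<forall>i. (D ^^ ((w + m - i) div Suc m)) (coeff p i) = 0)"

lemma weight_less_twisted_pderiv:
  assumes "weight_less m (Suc w) p"
  shows "weight_less m w (twisted_pderiv m p)"
  unfolding weight_less_def
proof
  fix i
  define k where "k = (w + m - i) div Suc m"
  have "(D ^^ k) (coeff p (Suc i)) = 0"
    using assms unfolding weight_less_def k_def by (metis add_Suc diff_Suc_Suc)
  moreover have "(D ^^ k) (D (coeff p (i - m))) = 0" if "m \<le> i"
  proof -
    have "(Suc w + m - (i - m)) div Suc m \<le> Suc k"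
    proof (cases "i \<le> w + m")
      case True
      then have "(Suc w + m - (i - m)) div Suc m = (w + m - i + Suc m) div Suc m"
        using \<open>m \<le> i\<close> by (intro arg_cong[where f = "\<lambda>x. x div Suc m"]) simp
      also have "\<dots> = k + 1"
        unfolding k_def by (rule div_add_self2) simp
      finally show ?thesis by simp
    qed simp
    then have "(D ^^ Suc k) (coeff p (i - m)) = 0"
      using assms unfolding weight_less_def by (blast intro: funpow_D_eq_0_mono)
    then show ?thesis by (simp del: funpow.simps add: funpow_Suc_right)
  qed
  ultimately show "(D ^^ k) (coeff (twisted_pderiv m p) i) = 0"
    by (simp del: of_nat_Suc add: coeff_twisted_pderiv funpow_D_diff funpow_D_of_nat_mult funpow_D_0)
qed

lemma funpow_twisted_pderiv_eq_0: "weight_less m w p \<Longrightarrow> (twisted_pderiv m ^^ w) p = 0"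
proof (induction w arbitrary: p)
  case 0
  then show ?case by (intro poly_eqI) (simp add: weight_less_def)
next
  case (Suc w)
  then show ?case by (simp del: funpow.simps add: funpow_Suc_right weight_less_twisted_pderiv)
qed

lemma exists_weight_less: "\<exists>w. weight_less m w p"
proof -
  have "\<forall>i. \<exists>n. (D ^^ n) (coeff p i) = 0" using nilpotent by blast
  from choice[OF this] obtain k where k: "\<And>i. (D ^^ k i) (coeff p i) = 0" by blast
  define K where "K = Max (k ` {..degree p})"
  have "(D ^^ ((degree p + Suc m * K + m - i) div Suc m)) (coeff p i) = 0" for i
  proof (cases "i \<le> degree p")
    case True
    then have "k i \<le> K" unfolding K_def by simp
    also have "K \<le> (degree p + Suc m * K + m - i) div Suc m"
      using True by (simp add: less_eq_div_iff_mult_less_eq mult.commute)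
    finally show ?thesis by (rule funpow_D_eq_0_mono[OF k])
  qed (simp add: coeff_eq_0 funpow_D_0)
  then show ?thesis unfolding weight_less_def by blast
qed

lemma twisted_pderiv_in_LND_star: "twisted_pderiv m \<in> LND_star (\<lambda>c. [:\<iota> c:])"
proof -
  have "is_derivation (\<lambda>c. [:\<iota> c:]) (twisted_pderiv m)"
    unfolding twisted_pderiv_def[abs_def]
    by (intro is_derivation_diff is_derivation_pderiv is_derivation_mult_left is_derivation_map_poly)
  moreover have "\<exists>n. (twisted_pderiv m ^^ n) p = 0" for p
    using exists_weight_less funpow_twisted_pderiv_eq_0 by blast
  moreover have "twisted_pderiv m [:0, 1:] = 1"
    unfolding twisted_pderiv_def by (simp add: pderiv_pCons map_poly_pCons D_0 D_1)
  ultimately show ?thesis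
    unfolding LND_star_def is_LND_def by blast
qed

lemma kernel_twisted_pderiv_mem_HD_star:
  assumes "D a = 0" "of_nat (Suc m) * a = D g"
  shows "[:g:] + monom a (Suc m) \<in> HD_star (\<lambda>c. [:\<iota> c:])"
proof (rule kernel_subset_HD_star[OF twisted_pderiv_in_LND_star])
  have "pderiv (monom a (Suc m)) = monom (D g) m"
    using assms(2) by (simp add: pderiv_monom)
  moreover have "map_poly D ([:g:] + monom a (Suc m)) = [:D g:]"
    by (rule poly_eqI) (simp add: coeff_map_poly D_0 D_add coeff_pCons assms(1) split: nat.split)
  moreover have "monom 1 m * [:D g:] = monom (D g) m"
    by (simp add: monom_altdef)
  ultimately show "twisted_pderiv m ([:g:] + monom a (Suc m)) = 0"
    unfolding twisted_pderiv_def by (simp add: pderiv_add pderiv_pCons)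
qed

end

section \<open>Subalgebras of a polynomial ring stable under affine substitutions\<close>

locale stable_subalgebra = field_algebra \<iota> for \<iota> :: "'k::field_char_0 \<Rightarrow> 'b::idom" +
  fixes R :: "'b poly set"
  assumes subring: "is_subring R"
    and const_mem: "[:b:] \<in> R"
    and pcompose_double_mem: "p \<in> R \<Longrightarrow> pcompose p [:0, 2:] \<in> R"
    and pcompose_shift_mem: "p \<in> R \<Longrightarrow> pcompose p [:1, 1:] \<in> R"
begin

lemma monom_mem_cancel:
  assumes "t \<noteq> 0" "monom (\<iota> t * c) i \<in> R"
  shows "monom c i \<in> R"
proof -
  have "[:\<iota> (inverse t):] * monom (\<iota> t * c) i \<in> R"
    by (rule subring_mult[OF subring const_mem assms(2)])
  then show ?thesis
    using ring_hom_inverse[OF is_ring_hom assms(1)] by (simp add: smult_monom mult.assoc[symmetric])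
qed

lemma monom_coeff_mem: "p \<in> R \<Longrightarrow> monom (coeff p k) k \<in> R"
proof (induction "degree p" arbitrary: p k rule: less_induct)
  case less
  define n where "n = degree p"
  show ?case
  proof (cases "n = 0")
    case True
    then show ?thesis
      using const_mem[of "coeff p 0"] subring_0[OF subring]
      by (cases k) (simp_all add: n_def monom_0 coeff_eq_0)
  next
    case False
    txt \<open>Substituting \<open>2x\<close> multiplies the coefficient of \<open>x\<^sup>i\<close> by \<open>2\<^sup>i\<close>, so \<open>s\<close> has smaller degree
      and keeps every other coefficient up to the unit factor \<open>2\<^sup>i - 2\<^sup>n\<close>.\<close>
    define s where "s = pcompose p [:0, 2:] - [:2 ^ n:] * p"
    have "s \<in> R"
      unfolding s_def using less.prems
      by (intro subring_diff[OF subring] pcompose_double_mem subring_mult[OF subring const_mem])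
    have coeff_s: "coeff s i = \<iota> (2 ^ i - 2 ^ n) * coeff p i" for i
      unfolding s_def
      by (simp add: coeff_pcompose_linear ring_hom_diff[OF is_ring_hom] ring_hom_power[OF is_ring_hom]
          ring_hom_of_nat[OF is_ring_hom, of 2, simplified] algebra_simps)
    have "degree s < n"
    proof -
      have "coeff s i = 0" if "n - 1 < i" for i
        using that unfolding coeff_s
        by (cases "i = n") (simp_all add: ring_hom_0[OF is_ring_hom] n_def coeff_eq_0)
      then have "degree s \<le> n - 1" by (intro degree_le) blast
      then show ?thesis using False by linarith
    qed
    have lower: "monom (coeff p i) i \<in> R" if "i \<noteq> n" for i
    proof (rule monom_mem_cancel)
      have "(of_nat (2 ^ i) :: 'k) \<noteq> of_nat (2 ^ n)"
        using that by (simp only: of_nat_eq_iff) simp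
      then show "(2 :: 'k) ^ i - 2 ^ n \<noteq> 0" by simp
      show "monom (\<iota> (2 ^ i - 2 ^ n) * coeff p i) i \<in> R"
        using less.hyps[OF \<open>degree s < n\<close>[unfolded n_def] \<open>s \<in> R\<close>, of i] by (simp add: coeff_s)
    qed
    have "p = (\<Sum>i<n. monom (coeff p i) i) + monom (coeff p n) n"
      using poly_as_sum_of_monoms[of p] by (simp add: n_def lessThan_Suc_atMost[symmetric])
    then have "monom (coeff p n) n = p - (\<Sum>i<n. monom (coeff p i) i)"
      by (metis add_diff_cancel_left')
    also have "\<dots> \<in> R"
      using less.prems lower by (intro subring_diff[OF subring] subring_sum[OF subring]) simp_all
    finally show ?thesis using lower by (cases "k = n") simp_all
  qed
qed

lemma monom_degree_one_mem:
  assumes "monom c k \<in> R" "k \<ge> 1"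
  shows "monom c 1 \<in> R"
proof (rule monom_mem_cancel)
  show "(of_nat k :: 'k) \<noteq> 0" using assms(2) by simp
  have "pcompose (monom c k) [:1, 1:] = smult c ([:1, 1:] ^ k)"
    by (simp add: pcompose_altdef map_poly_monom poly_monom)
  then have "coeff (pcompose (monom c k) [:1, 1:]) 1 = \<iota> (of_nat k) * c"
    using assms(2) by (simp add: coeff_linear_poly_power ring_hom_of_nat[OF is_ring_hom] mult.commute)
  then show "monom (\<iota> (of_nat k) * c) 1 \<in> R"
    using monom_coeff_mem[OF pcompose_shift_mem[OF assms(1)], of 1] by simp
qed

lemma eq_UNIV_if_X_mem:
  assumes "monom 1 1 \<in> R"
  shows "R = UNIV"
proof -
  have "p \<in> R" for p
  proof -
    have "p = (\<Sum>i\<le>degree p. [:coeff p i:] * monom 1 1 ^ i)"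
      by (simp add: monom_power smult_monom poly_as_sum_of_monoms)
    also have "\<dots> \<in> R"
      using assms const_mem
      by (intro subring_sum[OF subring] subring_mult[OF subring] subring_power[OF subring])
    finally show ?thesis .
  qed
  then show ?thesis by blast
qed

lemma X_mem_if_monom_in_ideal_gen:
  assumes "h \<noteq> 0" and "monom h M \<in> ideal_gen R ((\<lambda>i. monom h i) ` {..<M})"
  shows "monom 1 1 \<in> R"
proof -
  obtain c where c: "monom h M = (\<Sum>f\<in>(\<lambda>i. monom h i) ` {..<M}. c f * f)"
    "\<And>i. i < M \<Longrightarrow> c (monom h i) \<in> R"
    using assms(2) unfolding ideal_gen_def by auto
  have "inj_on (\<lambda>i. monom h i) {..<M}"
    using assms(1) by (intro inj_onI) (metis monom_eq_iff')
  then have "h = (\<Sum>i<M. coeff (c (monom h i) * monom h i) M)"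
    using arg_cong[OF c(1), of "\<lambda>p. coeff p M"] by (simp add: coeff_sum sum.reindex)
  also have "\<dots> = h * (\<Sum>i<M. coeff (c (monom h i)) (M - i))"
    unfolding sum_distrib_left
    by (rule sum.cong) (simp_all add: mult.commute[of "c _"] coeff_monom_mult)
  finally have "(\<Sum>i<M. coeff (c (monom h i)) (M - i)) = 1"
    using assms(1) mult_cancel_left2 by metis
  then have "monom 1 1 = (\<Sum>i<M. monom (coeff (c (monom h i)) (M - i)) 1)"
    by (simp flip: monom_sum)
  also have "\<dots> \<in> R"
    using c(2) monom_coeff_mem
    by (intro subring_sum[OF subring] monom_degree_one_mem) auto
  finally show ?thesis .
qed

lemma not_noetherian:
  assumes "h \<noteq> 0" and "\<And>n. monom h n \<in> R" and "R \<noteq> UNIV"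
  shows "\<not> noetherian R"
proof
  assume "noetherian R"
  define J where "J n = ideal_gen R ((\<lambda>i. monom h i) ` {..<n})" for n
  have J: "is_ideal R (J n)" for n
    unfolding J_def using assms(2) by (intro is_ideal_ideal_gen[OF subring]) auto
  have "mono J"
  proof (rule monoI)
    fix m n :: nat assume "m \<le> n"
    then have "(\<lambda>i. monom h i) ` {..<m} \<subseteq> (\<lambda>i. monom h i) ` {..<n}" by auto
    also have "\<dots> \<subseteq> J n"
      unfolding J_def by (rule generators_subset_ideal_gen[OF subring]) simp
    finally have "(\<lambda>i. monom h i) ` {..<m} \<subseteq> J n" .
    then show "J m \<subseteq> J n" unfolding J_def[of m] by (rule ideal_gen_subset[OF J])
  qed
  then obtain M where "\<And>n. J n \<subseteq> J M"
    using noetherian_chain_stabilizes[of R J, OF \<open>noetherian R\<close> J] by blast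
  moreover have "monom h M \<in> J (Suc M)"
    unfolding J_def by (rule subsetD[OF generators_subset_ideal_gen[OF subring]]) simp_all
  ultimately have "monom h M \<in> J M" by blast
  then have "monom 1 1 \<in> R"
    unfolding J_def by (rule X_mem_if_monom_in_ideal_gen[OF assms(1)])
  then show False using eq_UNIV_if_X_mem assms(3) by blast
qed

end

section \<open>The modified Derksen invariant of a cylinder\<close>

lemma field_algebra_const_poly:
  fixes \<iota> :: "'k::field \<Rightarrow> 'a::comm_ring_1"
  assumes "field_algebra \<iota>"
  shows "field_algebra (\<lambda>c. [:\<iota> c:])"
  using field_algebra.is_ring_hom[OF assms]
  by unfold_locales (simp add: ring_hom_map_def ring_hom_1 ring_hom_add ring_hom_mult)

lemma stable_subalgebra_HD_star:
  fixes \<iota> :: "'k::field_char_0 \<Rightarrow> 'b::idom"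
  assumes "field_algebra \<iota>"
  shows "stable_subalgebra \<iota> (HD_star (\<lambda>c. [:\<iota> c:]))"
proof -
  interpret field_algebra \<iota> by (rule assms)
  have "2 * \<iota> (inverse 2) = 1"
    using ring_hom_inverse[OF is_ring_hom, of 2] ring_hom_of_nat[OF is_ring_hom, of 2]
    by (simp add: mult.commute)
  then show ?thesis
    using field_algebra.is_subring_alg_gen[OF field_algebra_const_poly[OF assms]]
    by unfold_locales
      (auto simp: HD_star_def const_mem_HD_star[unfolded HD_star_def]
        intro: pcompose_affine_mem_HD_star[unfolded HD_star_def])
qed

lemma monom_local_slice_mem_HD_star:
  fixes \<iota> :: "'k::field_char_0 \<Rightarrow> 'b::idom"
  assumes "field_algebra \<iota>" "lnd \<iota> D" "D (D g) = 0"
  shows "monom (D g) n \<in> HD_star (\<lambda>c. [:\<iota> c:])"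
proof -
  interpret lnd \<iota> D by (rule assms(2))
  interpret stable_subalgebra \<iota> "HD_star (\<lambda>c. [:\<iota> c:])"
    by (rule stable_subalgebra_HD_star[OF assms(1)])
  show ?thesis
  proof (cases n)
    case 0
    then show ?thesis using const_mem by (simp add: monom_0)
  next
    case (Suc m)
    define t :: 'k where "t = inverse (of_nat (Suc m))"
    define a where "a = \<iota> t * D g"
    have "D a = 0"
      unfolding a_def by (simp add: D_mult D_const assms(3))
    moreover have "of_nat (Suc m) * a = D g"
      unfolding a_def t_def
      using ring_hom_inverse[OF is_ring_hom, of "of_nat (Suc m)"] ring_hom_of_nat[OF is_ring_hom]
      by (simp add: mult.assoc[symmetric] mult.commute[of "of_nat (Suc m)"] del: of_nat_Suc)
    ultimately have "[:g:] + monom a (Suc m) \<in> HD_star (\<lambda>c. [:\<iota> c:])"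
      by (rule kernel_twisted_pderiv_mem_HD_star)
    from subring_diff[OF subring this const_mem[of g]]
    have "monom (\<iota> t * D g) (Suc m) \<in> HD_star (\<lambda>c. [:\<iota> c:])"
      unfolding a_def by simp
    then show ?thesis
      unfolding Suc by (rule monom_mem_cancel[rotated]) (simp add: t_def del: of_nat_Suc)
  qed
qed

theorem theorem1:
  fixes \<iota> :: "'k::field_char_0 \<Rightarrow> 'b::idom"
  assumes "alg_closed_field TYPE('k)"
    and "ring_hom_map \<iota>"
    and "fg_algebra \<iota> UNIV"
    and "\<exists>D. is_LND \<iota> D \<and> D \<noteq> (\<lambda>_. 0)"
    and "HD_star (\<lambda>c. [:\<iota> c:]) \<noteq> UNIV"
  shows "\<not> fg_algebra (\<lambda>c. [:\<iota> c:]) (HD_star (\<lambda>c. [:\<iota> c:]))"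
proof
  have K: "field_algebra \<iota>" by unfold_locales (rule assms(2))
  assume "fg_algebra (\<lambda>c. [:\<iota> c:]) (HD_star (\<lambda>c. [:\<iota> c:]))"
  then obtain G where "finite G" "alg_gen (\<lambda>c. [:\<iota> c:]) G = HD_star (\<lambda>c. [:\<iota> c:])"
    unfolding fg_algebra_def by blast
  then have "noetherian (HD_star (\<lambda>c. [:\<iota> c:]))"
    using field_algebra.noetherian_alg_gen[OF field_algebra_const_poly[OF K]] by metis
  obtain D b where "lnd \<iota> D" "D b \<noteq> 0"
    using assms(4) unfolding lnd_def by fast
  then obtain g where "D g \<noteq> 0" "D (D g) = 0"
    using lnd.exists_local_slice by blast
  then have "\<not> noetherian (HD_star (\<lambda>c. [:\<iota> c:]))"
    using stable_subalgebra.not_noetherian[OF stable_subalgebra_HD_star[OF K]]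
      monom_local_slice_mem_HD_star[OF K \<open>lnd \<iota> D\<close>] assms(5)
    by blast
  then show False using \<open>noetherian _\<close> by contradiction
qed

end
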